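(* Let $w\in\mathcal W_n$ have $N$ blocks and suppose its block orbit $\langle w\rangle_\beta=\{\beta^k w:0\le k<N\}$ contains $N$ words. If $v$ is chosen uniformly at random from $\langle w\rangle_\beta$, then for all $i,k\in\{1,\dots,N\}$ the probability that the block of rank $i$ of $v$ is at position $k$ (i.e. $r_k(v)=i$) equals $\frac1N$.
   Context: Let $\mathcal A=\{a_1<a_2<\dots\}$ be a finite or countably infinite totally ordered alphabet. Lexicographic order: $u<v$ if $u$ is a proper prefix of $v$, or $u=ra_is$, $v=ra_jt$ with $i<j$. A word is primitive if it is not of the form $u^r$ with $r\ge 2$. $\mathcal W_n$ is the set of primitive words of length $n$ whose first letter is the smallest letter $a_w$ occurring in $w$ and whose last letter is different from $a_w$. Each $w\in\mathcal W_n$ decomposes uniquely as $w=B_1\cdots B_N$ into blocks: each block begins with a run of $a_w$ and ends just before the next run of $a_w$. For $j=1,\dots,N$ let $w^{(j)}=B_j\cdots B_NB_1\cdots B_{j-1}$; the rank $r_j(w)$ is the rank of $w^{(j)}$ among $w^{(1)},\dots,w^{(N)}$ in increasing lexicographic order (rank 1 = smallest). The block rotation is $\beta w=B_2\cdots B_NB_1$, and the block orbit of $w$ is $\langle w\rangle_\beta=\{w,\beta w,\dots,\beta^{N-1}w\}$. *)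

theory Defs
  imports Main "HOL-Probability.Probability_Mass_Function"
begin

text \<open>Letters: the alphabet a_1 < a_2 < ... is modelled by natural numbers (a_i = i) with
their usual order; a word is a list of letters. Lexicographic order (proper prefix is
smaller) is the library's lexordp.\<close>

definition primitive :: "nat list \<Rightarrow> bool" where
  "primitive w \<longleftrightarrow> \<not> (\<exists>u r. r \<ge> 2 \<and> w = concat (replicate r u))"

definition minletter :: "nat list \<Rightarrow> nat" where
  "minletter w = Min (set w)"

definition Wset :: "nat \<Rightarrow> nat list set" where
  "Wset n = {w. length w = n \<and> w \<noteq> [] \<and> primitive w \<and>
                 hd w = minletter w \<and> last w \<noteq> minletter w}"

text \<open>0-based positions where a run of the minimal letter begins (= block starts).\<close>
definition block_starts :: "nat list \<Rightarrow> nat list" where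
  "block_starts w = filter (\<lambda>i. w ! i = minletter w \<and> (i = 0 \<or> w ! (i - 1) \<noteq> minletter w))
                           [0..<length w]"

definition nblocks :: "nat list \<Rightarrow> nat" where
  "nblocks w = length (block_starts w)"

definition blocks :: "nat list \<Rightarrow> nat list list" where
  "blocks w = (let s = block_starts w @ [length w] in
     map (\<lambda>j. take (s ! (j + 1) - s ! j) (drop (s ! j) w)) [0..<nblocks w])"

definition block_rot :: "nat list \<Rightarrow> nat \<Rightarrow> nat list" where
  "block_rot w j = concat (rotate (j - 1) (blocks w))"

definition rank :: "nat list \<Rightarrow> nat \<Rightarrow> nat" where
  "rank w j = 1 + card {l \<in> {1..nblocks w}. ord_class.lexordp (block_rot w l) (block_rot w j)}"

definition beta :: "nat list \<Rightarrow> nat list" where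
  "beta w = concat (rotate1 (blocks w))"

definition block_orbit :: "nat list \<Rightarrow> nat list set" where
  "block_orbit w = {(beta ^^ k) w | k. k < nblocks w}"

end

theory Submission
  imports Defs
begin

text \<open>Writing w = B_1 ... B_N, every word of the block orbit and every w^(j) is the
  concatenation of a cyclic rotation of the block list [B_1, ..., B_N]. Hence for v in the orbit the
  words v^(1), ..., v^(N) run through the whole orbit, so r_k(v) is the lexicographic rank of v^(k)
  inside the orbit. Since the orbit has N elements, v \<mapsto> v^(k) permutes it and ranking is a
  bijection onto {1..N}; thus exactly one of the N equally likely words v satisfies r_k(v) = i.\<close>

section \<open>Decomposition into blocks\<close>

definition run_starts :: "nat \<Rightarrow> nat list \<Rightarrow> nat list" where
  "run_starts m u = filter (\<lambda>i. u ! i = m \<and> (i = 0 \<or> u ! (i - 1) \<noteq> m)) [0..<length u]"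

definition segments :: "nat list \<Rightarrow> nat list \<Rightarrow> nat list list" where
  "segments u s = map (\<lambda>j. take (s ! (j + 1) - s ! j) (drop (s ! j) u)) [0..<length s - 1]"

definition is_block :: "nat \<Rightarrow> nat list \<Rightarrow> bool" where
  "is_block m b \<longleftrightarrow> (\<exists>a x. a > 0 \<and> x \<noteq> [] \<and> m \<notin> set x \<and> b = replicate a m @ x)"

definition is_block_list :: "nat list list \<Rightarrow> bool" where
  "is_block_list cs \<longleftrightarrow> (\<forall>c\<in>set cs. is_block (minletter (concat cs)) c)"

lemma blocks_conv_segments: "blocks u = segments u (run_starts (minletter u) u @ [length u])"
  unfolding blocks_def segments_def nblocks_def block_starts_def run_starts_def Let_def by simp

lemma length_blocks: "length (blocks u) = nblocks u"
  by (simp add: blocks_def Let_def)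

lemma is_block_D:
  assumes "is_block m b"
  shows "b \<noteq> []" "b ! 0 = m" "last b \<noteq> m"
    and "\<And>i. i < length b \<Longrightarrow> 0 < i \<Longrightarrow> b ! i = m \<Longrightarrow> b ! (i - 1) = m"
proof -
  obtain a x where ax: "a > 0" "x \<noteq> []" "m \<notin> set x" "b = replicate a m @ x"
    using assms is_block_def by auto
  show "b \<noteq> []" "b ! 0 = m" using ax by (simp_all add: nth_append)
  show "last b \<noteq> m" using ax by (metis last_append last_in_set)
  fix i assume i: "i < length b" "0 < i" "b ! i = m"
  have "i < a"
  proof (rule ccontr)
    assume "\<not> i < a"
    then have "x ! (i - a) = m" "i - a < length x" using i ax by (simp_all add: nth_append)
    then show False using ax(3) nth_mem by metis
  qed
  then have "i - 1 < a" by simp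
  then show "b ! (i - 1) = m" using ax by (simp add: nth_append)
qed

lemma run_starts_block_append:
  assumes b: "is_block m b"
  shows "run_starts m (b @ r) = 0 # map (\<lambda>i. i + length b) (run_starts m r)"
proof -
  let ?P = "\<lambda>i. (b @ r) ! i = m \<and> (i = 0 \<or> (b @ r) ! (i - 1) \<noteq> m)"
  have lb: "length b > 0" using is_block_D(1)[OF b] by simp
  have upt_split: "[0..<length (b @ r)] = [0..<length b] @ map (\<lambda>i. i + length b) [0..<length r]"
    using upt_add_eq_append[of 0 "length b" "length r"] map_add_upt[of "length b" "length r"]
    by (simp add: add.commute)
  have in_b: "filter ?P [0..<length b] = [0]"
  proof -
    have "filter ?P [1..<length b] = []"
      using is_block_D(4)[OF b] by (intro filter_False) (auto simp: nth_append)
    moreover have "?P 0" using is_block_D(2)[OF b] lb by (simp add: nth_append)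
    ultimately show ?thesis using upt_conv_Cons[OF lb] by simp
  qed
  have in_r: "filter ?P (map (\<lambda>i. i + length b) [0..<length r])
      = map (\<lambda>i. i + length b) (run_starts m r)"
    unfolding run_starts_def filter_map comp_def
  proof (rule arg_cong[where f = "map _"], rule filter_cong[OF refl])
    fix i
    show "?P (i + length b) = (r ! i = m \<and> (i = 0 \<or> r ! (i - 1) \<noteq> m))"
    proof (cases i)
      case 0
      have "(b @ r) ! (length b - 1) = last b" using lb by (simp add: nth_append last_conv_nth)
      then show ?thesis using 0 is_block_D(3)[OF b] by (simp add: nth_append)
    next
      case (Suc j)
      then show ?thesis by (simp add: nth_append)
    qed
  qed
  show ?thesis unfolding run_starts_def upt_split filter_append
    using in_b in_r by (simp add: run_starts_def)
qed

lemma segments_shifted_Cons: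
  assumes "s \<noteq> []" "s ! 0 = 0"
  shows "segments (b @ r) (0 # map (\<lambda>i. i + length b) s) = b # segments r s"
proof (rule nth_equalityI)
  show "length (segments (b @ r) (0 # map (\<lambda>i. i + length b) s)) = length (b # segments r s)"
    using assms by (simp add: segments_def)
  fix j assume "j < length (segments (b @ r) (0 # map (\<lambda>i. i + length b) s))"
  then have j: "j < length s" by (simp add: segments_def)
  show "segments (b @ r) (0 # map (\<lambda>i. i + length b) s) ! j = (b # segments r s) ! j"
  proof (cases j)
    case 0
    then show ?thesis using assms j by (simp add: segments_def)
  next
    case (Suc t)
    then have "t + 1 < length s" "[0..<length s - 1] ! t = t" using j by simp_all
    then show ?thesis using Suc by (simp add: segments_def nth_Cons' add.commute)
  qed
qed

lemma segments_concat_blocks: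
  "\<forall>c\<in>set cs. is_block m c \<Longrightarrow>
    segments (concat cs) (run_starts m (concat cs) @ [length (concat cs)]) = cs"
proof (induction cs)
  case Nil
  then show ?case by (simp add: segments_def run_starts_def)
next
  case (Cons c cs)
  let ?r = "concat cs"
  have c: "is_block m c" using Cons.prems by simp
  have first_start: "(run_starts m ?r @ [length ?r]) ! 0 = 0"
  proof (cases cs)
    case Nil
    then show ?thesis by (simp add: run_starts_def)
  next
    case (Cons c' cs')
    then have "is_block m c'" using Cons.prems by simp
    from run_starts_block_append[OF this] show ?thesis using Cons by simp
  qed
  have "run_starts m (concat (c # cs)) @ [length (concat (c # cs))]
      = 0 # map (\<lambda>i. i + length c) (run_starts m ?r @ [length ?r])"
    using run_starts_block_append[OF c] by simp
  then have "segments (concat (c # cs)) (run_starts m (concat (c # cs)) @ [length (concat (c # cs))])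
      = c # segments ?r (run_starts m ?r @ [length ?r])"
    using segments_shifted_Cons[OF _ first_start, of c ?r] by (simp add: add.commute)
  with Cons show ?case by simp
qed

lemma blocks_concat: "is_block_list cs \<Longrightarrow> blocks (concat cs) = cs"
  unfolding is_block_list_def using segments_concat_blocks blocks_conv_segments by metis

lemma nblocks_concat: "is_block_list cs \<Longrightarrow> nblocks (concat cs) = length cs"
  using blocks_concat length_blocks by metis

lemma concat_blocks_exists:
  "u \<noteq> [] \<Longrightarrow> hd u = m \<Longrightarrow> last u \<noteq> m \<Longrightarrow> \<exists>cs. concat cs = u \<and> (\<forall>c\<in>set cs. is_block m c)"
proof (induction "length u" arbitrary: u rule: less_induct)
  case less
  define a where "a = length (takeWhile (\<lambda>x. x = m) u)"
  define tl_u where "tl_u = dropWhile (\<lambda>x. x = m) u"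
  define x where "x = takeWhile (\<lambda>y. y \<noteq> m) tl_u"
  define r where "r = dropWhile (\<lambda>y. y \<noteq> m) tl_u"
  have "\<forall>y\<in>set (takeWhile (\<lambda>x. x = m) u). y = m" by (auto dest: set_takeWhileD)
  then have "takeWhile (\<lambda>x. x = m) u = replicate a m"
    unfolding a_def by (simp add: replicate_length_same)
  then have u: "u = replicate a m @ tl_u" "tl_u = x @ r"
    unfolding tl_u_def x_def r_def by (metis takeWhile_dropWhile_id)+
  have a: "a > 0" using less.prems unfolding a_def by (cases u) auto
  have "tl_u \<noteq> []" using u(1) a less.prems(3) by auto
  then have "hd tl_u \<noteq> m" using hd_dropWhile[of "\<lambda>x. x = m" u] unfolding tl_u_def by simp
  then have "x \<noteq> []" using \<open>tl_u \<noteq> []\<close> unfolding x_def by (cases tl_u) auto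
  moreover have "m \<notin> set x" unfolding x_def by (auto dest: set_takeWhileD)
  ultimately have first_block: "is_block m (replicate a m @ x)" using a is_block_def by blast
  show ?case
  proof (cases "r = []")
    case True
    then show ?thesis using u first_block by (intro exI[of _ "[replicate a m @ x]"]) simp
  next
    case False
    have "hd r = m" using hd_dropWhile[of "\<lambda>y. y \<noteq> m" tl_u] False unfolding r_def by simp
    moreover have "last r \<noteq> m" using less.prems(3) u False by simp
    moreover have "length r < length u" using u \<open>x \<noteq> []\<close> by simp
    ultimately obtain cs where "concat cs = r" "\<forall>c\<in>set cs. is_block m c"
      using less.hyps False by blast
    then show ?thesis using u first_block by (intro exI[of _ "(replicate a m @ x) # cs"]) simp
  qed
qed

section \<open>Rotations of the block list\<close>

lemma range_rotate_conv_lessThan: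
  assumes "xs \<noteq> []"
  shows "range (\<lambda>t. rotate t xs) = (\<lambda>t. rotate t xs) ` {..<length xs}"
proof
  show "range (\<lambda>t. rotate t xs) \<subseteq> (\<lambda>t. rotate t xs) ` {..<length xs}"
  proof
    fix y assume "y \<in> range (\<lambda>t. rotate t xs)"
    then obtain t where "y = rotate (t mod length xs) xs" by (metis rangeE rotate_conv_mod)
    moreover have "t mod length xs < length xs" using assms by simp
    ultimately show "y \<in> (\<lambda>t. rotate t xs) ` {..<length xs}" by blast
  qed
qed auto

lemma range_rotate_rotate: "range (\<lambda>t. rotate t (rotate c xs)) = range (\<lambda>t. rotate t xs)"
proof (cases "xs = []")
  case False
  have "rotate s xs = rotate (s + (length xs - 1) * c) (rotate c xs)" for s
  proof -
    have "s + (length xs - 1) * c + c = s + c * length xs"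
      using False by (cases "length xs") (simp_all add: algebra_simps)
    then have "rotate (s + (length xs - 1) * c) (rotate c xs) = rotate (s + c * length xs) xs"
      by (metis rotate_rotate)
    also have "\<dots> = rotate s xs" by (metis rotate_conv_mod mod_mult_self1)
    finally show ?thesis by simp
  qed
  then show ?thesis by (auto simp: rotate_rotate)
qed simp

lemma is_block_list_rotate: "is_block_list cs \<Longrightarrow> is_block_list (rotate j cs)"
  by (simp add: is_block_list_def minletter_def)

lemma beta_concat: "is_block_list cs \<Longrightarrow> beta (concat cs) = concat (rotate1 cs)"
  by (simp add: beta_def blocks_concat)

lemma block_rot_concat: "is_block_list cs \<Longrightarrow> block_rot (concat cs) l = concat (rotate (l - 1) cs)"
  by (simp add: block_rot_def blocks_concat)

lemma block_orbit_concat: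
  assumes "is_block_list cs" "cs \<noteq> []"
  shows "block_orbit (concat cs) = concat ` range (\<lambda>t. rotate t cs)"
proof -
  have "(beta ^^ t) (concat cs) = concat (rotate t cs)" for t
    by (induction t) (simp_all add: beta_concat is_block_list_rotate assms(1))
  with nblocks_concat[OF assms(1)] show ?thesis
    unfolding block_orbit_def range_rotate_conv_lessThan[OF assms(2)] by auto
qed

lemma block_rot_image:
  assumes "is_block_list cs" "cs \<noteq> []"
  shows "(\<lambda>l. block_rot (concat cs) l) ` {1..length cs} = concat ` range (\<lambda>t. rotate t cs)"
proof -
  have "(\<lambda>l. block_rot (concat cs) l) ` {1..length cs} = concat ` (\<lambda>t. rotate t cs) ` {..<length cs}"
    unfolding image_Suc_lessThan[symmetric] image_image block_rot_concat[OF assms(1)] by simp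
  then show ?thesis using range_rotate_conv_lessThan[OF assms(2)] by simp
qed

section \<open>Lexicographic rank within a finite set\<close>

definition lex_rank :: "'a::linorder list set \<Rightarrow> 'a list \<Rightarrow> nat" where
  "lex_rank A y = 1 + card {z \<in> A. ord_class.lexordp z y}"

lemma lex_rank_strict_mono:
  assumes "finite A" "y \<in> A" "ord_class.lexordp y y'"
  shows "lex_rank A y < lex_rank A y'"
proof -
  have "{z \<in> A. ord_class.lexordp z y} \<subset> {z \<in> A. ord_class.lexordp z y'}"
  proof
    show "{z \<in> A. ord_class.lexordp z y} \<subseteq> {z \<in> A. ord_class.lexordp z y'}"
      using assms(3) by (auto intro: lexordp_trans)
    have "y \<in> {z \<in> A. ord_class.lexordp z y'}" "y \<notin> {z \<in> A. ord_class.lexordp z y}"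
      using assms(2,3) lexordp_irreflexive' by auto
    then show "{z \<in> A. ord_class.lexordp z y} \<noteq> {z \<in> A. ord_class.lexordp z y'}" by blast
  qed
  then show ?thesis unfolding lex_rank_def using assms(1) by (simp add: psubset_card_mono)
qed

lemma bij_betw_lex_rank:
  assumes "finite A"
  shows "bij_betw (lex_rank A) A {1..card A}"
proof -
  have "inj_on (lex_rank A) A"
  proof (rule inj_onI)
    fix y y' assume y: "y \<in> A" "y' \<in> A" "lex_rank A y = lex_rank A y'"
    consider "ord_class.lexordp y y'" | "y = y'" | "ord_class.lexordp y' y"
      using lexordp_linear by blast
    then show "y = y'"
      using lex_rank_strict_mono[OF assms, of y y'] lex_rank_strict_mono[OF assms, of y' y] y
      by cases auto
  qed
  moreover have "lex_rank A y \<in> {1..card A}" if "y \<in> A" for y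
  proof -
    have "{z \<in> A. ord_class.lexordp z y} \<subseteq> A - {y}" using lexordp_irreflexive' by auto
    then have "card {z \<in> A. ord_class.lexordp z y} \<le> card (A - {y})"
      using assms by (intro card_mono) auto
    also have "\<dots> = card A - 1" using assms that by simp
    moreover have "card A > 0" using assms that card_gt_0_iff by blast
    ultimately show ?thesis unfolding lex_rank_def by simp
  qed
  ultimately show ?thesis
    by (intro bij_betw_imageI card_subset_eq) (auto simp: card_image)
qed

lemma rank_eq_lex_rank:
  assumes "(\<lambda>l. block_rot v l) ` {1..nblocks v} = A" "card A = nblocks v"
  shows "rank v k = lex_rank A (block_rot v k)"
proof -
  have "inj_on (\<lambda>l. block_rot v l) {1..nblocks v}"
    using assms by (simp add: eq_card_imp_inj_on)
  then have "inj_on (\<lambda>l. block_rot v l)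
      {l \<in> {1..nblocks v}. ord_class.lexordp (block_rot v l) (block_rot v k)}"
    by (rule inj_on_subset) auto
  then have "card {l \<in> {1..nblocks v}. ord_class.lexordp (block_rot v l) (block_rot v k)}
      = card ((\<lambda>l. block_rot v l) ` {l \<in> {1..nblocks v}. ord_class.lexordp (block_rot v l) (block_rot v k)})"
    by (simp add: card_image)
  also have "\<dots> = card {z \<in> A. ord_class.lexordp z (block_rot v k)}"
    using assms(1) by (intro arg_cong[where f = card]) auto
  finally show ?thesis unfolding rank_def lex_rank_def by simp
qed

lemma card_fiber_bij_betw:
  assumes "bij_betw f A B" "b \<in> B"
  shows "card {x \<in> A. f x = b} = 1"
proof -
  obtain a where "a \<in> A" "f a = b" using assms by (auto simp: bij_betw_def)
  then have "{x \<in> A. f x = b} = {a}" using assms(1) by (auto simp: bij_betw_def inj_on_def)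
  then show ?thesis by simp
qed

section \<open>Ranks along the block orbit\<close>

lemma finite_block_orbit: "finite (block_orbit w)"
  unfolding block_orbit_def by simp

lemma block_rot_image_block_orbit:
  assumes "is_block_list cs"
  shows "(\<lambda>v. block_rot v k) ` block_orbit (concat cs) = block_orbit (concat cs)"
proof (cases "cs = []")
  case False
  have "(\<lambda>v. block_rot v k) ` concat ` range (\<lambda>t. rotate t cs)
      = concat ` range (\<lambda>t. rotate t (rotate (k - 1) cs))"
    unfolding image_image
    by (simp add: block_rot_concat is_block_list_rotate[OF assms] rotate_rotate add.commute)
  then show ?thesis unfolding block_orbit_concat[OF assms False] range_rotate_rotate .
qed (use nblocks_concat[OF assms] in \<open>simp add: block_orbit_def\<close>)

lemma rank_block_orbit:
  assumes "is_block_list cs" "card (block_orbit (concat cs)) = length cs"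
    and "v \<in> block_orbit (concat cs)"
  shows "rank v k = lex_rank (block_orbit (concat cs)) (block_rot v k)"
proof -
  have "cs \<noteq> []" using assms(3) nblocks_concat[OF assms(1)] by (auto simp: block_orbit_def)
  then obtain j where v: "v = concat (rotate j cs)"
    using assms(3) block_orbit_concat[OF assms(1)] by auto
  have cs_j: "is_block_list (rotate j cs)" "rotate j cs \<noteq> []"
    using is_block_list_rotate[OF assms(1)] \<open>cs \<noteq> []\<close> by simp_all
  have "(\<lambda>l. block_rot v l) ` {1..nblocks v} = concat ` range (\<lambda>t. rotate t (rotate j cs))"
    using block_rot_image[OF cs_j] nblocks_concat[OF cs_j(1)] v by simp
  also have "\<dots> = block_orbit (concat cs)"
    unfolding block_orbit_concat[OF assms(1) \<open>cs \<noteq> []\<close>] range_rotate_rotate ..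
  finally show ?thesis
    using rank_eq_lex_rank assms(2) nblocks_concat[OF cs_j(1)] v by simp
qed

lemma bij_betw_rank_block_orbit:
  assumes "is_block_list cs" "card (block_orbit (concat cs)) = length cs"
  shows "bij_betw (\<lambda>v. rank v k) (block_orbit (concat cs)) {1..length cs}"
proof -
  let ?O = "block_orbit (concat cs)"
  have "bij_betw (\<lambda>v. block_rot v k) ?O ?O"
    using block_rot_image_block_orbit[OF assms(1)] finite_block_orbit
    by (simp add: bij_betw_def eq_card_imp_inj_on)
  from bij_betw_trans[OF this bij_betw_lex_rank[OF finite_block_orbit]]
  have "bij_betw (\<lambda>v. lex_rank ?O (block_rot v k)) ?O {1..length cs}"
    using assms(2) by (simp add: comp_def)
  moreover have "bij_betw (\<lambda>v. rank v k) ?O {1..length cs} \<longleftrightarrow>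
      bij_betw (\<lambda>v. lex_rank ?O (block_rot v k)) ?O {1..length cs}"
    by (rule bij_betw_cong) (simp add: rank_block_orbit[OF assms])
  ultimately show ?thesis by simp
qed

theorem corollary1:
  fixes w :: "nat list" and n N i k :: nat
  assumes "w \<in> Wset n"
    and "nblocks w = N"
    and "card (block_orbit w) = N"
    and "i \<in> {1..N}" and "k \<in> {1..N}"
  shows "measure_pmf.prob (pmf_of_set (block_orbit w)) {v. rank v k = i} = 1 / real N"
proof -
  have "w \<noteq> []" "hd w = minletter w" "last w \<noteq> minletter w"
    using assms(1) by (auto simp: Wset_def)
  then obtain cs where cs: "concat cs = w" "is_block_list cs"
    using concat_blocks_exists unfolding is_block_list_def by metis
  then have "length cs = N" using nblocks_concat assms(2) by metis
  then have "bij_betw (\<lambda>v. rank v k) (block_orbit w) {1..N}"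
    using bij_betw_rank_block_orbit[OF cs(2)] cs(1) assms(3) by simp
  from card_fiber_bij_betw[OF this assms(4)]
  have "card (block_orbit w \<inter> {v. rank v k = i}) = 1" by (simp add: Int_def)
  moreover have "block_orbit w \<noteq> {}" using assms(3,5) by auto
  ultimately show ?thesis
    using measure_pmf_of_set[OF _ finite_block_orbit] assms(3) by simp
qed

end
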